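(* Let $d\ge2$ and let $\rho_{DS}$ be a diagonal symmetric state on $(\mathbb{C}^d)^{\otimes 4}$. If the partial transpose of $\rho_{DS}$ with respect to the bipartition of the four parties into two pairs ($2:2$) is positive semidefinite, then $\rho_{DS}$ is PPT, i.e. its partial transpose with respect to every bipartition of the four parties is positive semidefinite.
   Context: For $N=4$ parties and local dimension $d$, Dicke states are $|D_{\mathbf k}\rangle=\binom{4}{\mathbf k}^{-1/2}\sum_{\pi}\pi\big(|0\rangle^{\otimes k_0}\otimes\cdots\otimes|d-1\rangle^{\otimes k_{d-1}}\big)$, where $\mathbf k=(k_0,\dots,k_{d-1})$, $k_i\ge0$, $\sum k_i=4$, the sum runs over distinct permutations of the tensor factors and $\binom{4}{\mathbf k}=\frac{4!}{k_0!\cdots k_{d-1}!}$. A diagonal symmetric state is a convex mixture $\sum_{\mathbf k}p_{\mathbf k}|D_{\mathbf k}\rangle\langle D_{\mathbf k}|$ with $p_{\mathbf k}\ge0$, $\sum p_{\mathbf k}=1$. By permutation symmetry the relevant bipartitions are $1:3$ and $2:2$. *)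

theory Defs
  imports Complex_Main "HOL-Library.FuncSet"
begin

text \<open>Computational basis vectors of
  (C^d)^{\<otimes>4} are indexed by maps x : {0..<4} \<rightarrow> {0..<d} (extensional).
  An operator is a matrix indexed by pairs of such basis labels.\<close>

definition basis_idx :: "nat \<Rightarrow> (nat \<Rightarrow> nat) set" where
  "basis_idx d = ({0..<4::nat} \<rightarrow>\<^sub>E {0..<d})"

definition dicke_labels :: "nat \<Rightarrow> (nat \<Rightarrow> nat) set" where
  "dicke_labels d = {k \<in> {0..<d} \<rightarrow>\<^sub>E UNIV. (\<Sum>j<d. k j) = 4}"

definition multinom4 :: "nat \<Rightarrow> (nat \<Rightarrow> nat) \<Rightarrow> nat" where
  "multinom4 d k = fact 4 div (\<Prod>j<d. fact (k j))"

text \<open>Amplitude of the Dicke state |D_k> on basis vector x: the basis vectors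
  occurring in the sum over distinct permutations are exactly those with k_j
  tensor factors equal to |j>, each with coefficient multinom^{-1/2}.\<close>
definition dicke_amp :: "nat \<Rightarrow> (nat \<Rightarrow> nat) \<Rightarrow> (nat \<Rightarrow> nat) \<Rightarrow> complex" where
  "dicke_amp d k x =
     (if \<forall>j<d. card {i\<in>{0..<4::nat}. x i = j} = k j
      then complex_of_real (1 / sqrt (real (multinom4 d k))) else 0)"

definition diag_sym_state :: "nat \<Rightarrow> ((nat \<Rightarrow> nat) \<Rightarrow> (nat \<Rightarrow> nat) \<Rightarrow> complex) \<Rightarrow> bool" where
  "diag_sym_state d \<rho> \<longleftrightarrow>
     (\<exists>p :: (nat \<Rightarrow> nat) \<Rightarrow> real.
        (\<forall>k\<in>dicke_labels d. p k \<ge> 0) \<and> (\<Sum>k\<in>dicke_labels d. p k) = 1 \<and>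
        (\<forall>x\<in>basis_idx d. \<forall>y\<in>basis_idx d.
           \<rho> x y = (\<Sum>k\<in>dicke_labels d.
                      complex_of_real (p k) * dicke_amp d k x * cnj (dicke_amp d k y))))"

definition ptrans :: "nat set \<Rightarrow> ((nat \<Rightarrow> nat) \<Rightarrow> (nat \<Rightarrow> nat) \<Rightarrow> complex)
                      \<Rightarrow> ((nat \<Rightarrow> nat) \<Rightarrow> (nat \<Rightarrow> nat) \<Rightarrow> complex)" where
  "ptrans S \<rho> x y = \<rho> (\<lambda>i. if i \<in> S then y i else x i) (\<lambda>i. if i \<in> S then x i else y i)"

definition psd :: "nat \<Rightarrow> ((nat \<Rightarrow> nat) \<Rightarrow> (nat \<Rightarrow> nat) \<Rightarrow> complex) \<Rightarrow> bool" where
  "psd d M \<longleftrightarrow>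
     (\<forall>v :: (nat \<Rightarrow> nat) \<Rightarrow> complex.
        Im (\<Sum>x\<in>basis_idx d. \<Sum>y\<in>basis_idx d. cnj (v x) * M x y * v y) = 0 \<and>
        Re (\<Sum>x\<in>basis_idx d. \<Sum>y\<in>basis_idx d. cnj (v x) * M x y * v y) \<ge> 0)"

end

(* Write a basis label x as the multiset occupation x of its four local values. A diagonal
   symmetric state has entries rho x y = g (occupation x) if occupation x = occupation y and 0
   otherwise, with g >= 0. Such a rho is invariant under permutations of the parties, and the
   partial transpose on the complement of S is the transpose of the one on S, so every
   bipartition reduces to S = {0} (1:3) or S = {0, 1} (2:2).
   For S = {0}, the entry between x and y only depends on the pairs (x 0, {#x 1, x 2, x 3#}) and
   (y 0, {#y 1, y 2, y 3#}), and on these pairs the matrix is block diagonal: a pair (j, m) with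
   j not in m is coupled only to itself, with entry g >= 0, and for each two-element multiset r
   the pairs (j, j + r) form a block with entries g (i + j + r). That block is the restriction
   of the 2:2 partial transpose to the basis vectors |s i t i> with r = {#s, t#}, hence
   positive semidefinite by hypothesis. *)

theory Submission
  imports Defs "HOL-Library.Multiset" "HOL-Combinatorics.Permutations"
begin

type_synonym basis_label = "nat \<Rightarrow> nat"
type_synonym operator = "basis_label \<Rightarrow> basis_label \<Rightarrow> complex"

section \<open>Quadratic forms on the computational basis\<close>

definition quad_form :: "nat \<Rightarrow> operator \<Rightarrow> (basis_label \<Rightarrow> complex) \<Rightarrow> complex" where
  "quad_form d M v = (\<Sum>x\<in>basis_idx d. \<Sum>y\<in>basis_idx d. cnj (v x) * M x y * v y)"

lemma psd_iff_quad_form: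
  "psd d M \<longleftrightarrow> (\<forall>v. Im (quad_form d M v) = 0 \<and> 0 \<le> Re (quad_form d M v))"
  by (simp add: psd_def quad_form_def)

lemma finite_basis_idx [simp]: "finite (basis_idx d)"
  by (simp add: basis_idx_def finite_PiE)

lemma psd_cong:
  assumes "\<And>x y. x \<in> basis_idx d \<Longrightarrow> y \<in> basis_idx d \<Longrightarrow> M x y = M' x y"
  shows "psd d M \<longleftrightarrow> psd d M'"
proof -
  have "quad_form d M v = quad_form d M' v" for v
    unfolding quad_form_def by (intro sum.cong refl) (simp add: assms)
  then show ?thesis
    by (simp add: psd_iff_quad_form)
qed

lemma quad_form_transpose:
  "quad_form d (\<lambda>x y. M y x) v = quad_form d M (\<lambda>x. cnj (v x))"
proof -
  have "quad_form d (\<lambda>x y. M y x) v =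
      (\<Sum>y\<in>basis_idx d. \<Sum>x\<in>basis_idx d. cnj (v x) * M y x * v y)"
    unfolding quad_form_def by (rule sum.swap)
  also have "\<dots> = quad_form d M (\<lambda>x. cnj (v x))"
    unfolding quad_form_def by (intro sum.cong refl) (simp add: mult.commute)
  finally show ?thesis .
qed

lemma psd_transpose: "psd d M \<Longrightarrow> psd d (\<lambda>x y. M y x)"
  using quad_form_transpose[of d M] by (simp add: psd_iff_quad_form)

lemma sum_sum_reindex_bij_betw:
  fixes P :: "'a \<Rightarrow> 'a \<Rightarrow> 'b::comm_monoid_add"
  assumes f: "bij_betw f A A"
  shows "(\<Sum>x\<in>A. \<Sum>y\<in>A. P (f x) (f y)) = (\<Sum>x\<in>A. \<Sum>y\<in>A. P x y)"
proof -
  have "(\<Sum>x\<in>A. \<Sum>y\<in>A. P (f x) (f y)) = (\<Sum>x\<in>A. \<Sum>y\<in>A. P (f x) y)"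
    by (intro sum.cong refl sum.reindex_bij_betw[OF f])
  also have "\<dots> = (\<Sum>x\<in>A. \<Sum>y\<in>A. P x y)"
    by (rule sum.reindex_bij_betw[OF f, of "\<lambda>x. \<Sum>y\<in>A. P x y"])
  finally show ?thesis .
qed

lemma quad_form_reindex:
  assumes f: "bij_betw f (basis_idx d) (basis_idx d)"
  shows "quad_form d (\<lambda>x y. M (f x) (f y)) v = quad_form d M (v \<circ> inv_into (basis_idx d) f)"
proof -
  let ?w = "v \<circ> inv_into (basis_idx d) f"
  have "quad_form d (\<lambda>x y. M (f x) (f y)) v =
      (\<Sum>x\<in>basis_idx d. \<Sum>y\<in>basis_idx d. cnj (?w (f x)) * M (f x) (f y) * ?w (f y))"
    unfolding quad_form_def
    by (intro sum.cong refl) (simp add: bij_betw_imp_inj_on[OF f])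
  also have "\<dots> = quad_form d M ?w"
    unfolding quad_form_def by (rule sum_sum_reindex_bij_betw[OF f])
  finally show ?thesis .
qed

lemma psd_reindex:
  "bij_betw f (basis_idx d) (basis_idx d) \<Longrightarrow> psd d M \<Longrightarrow> psd d (\<lambda>x y. M (f x) (f y))"
  using quad_form_reindex[of f d M] by (simp add: psd_iff_quad_form)

section \<open>Partial transposes under permutations and complements of parties\<close>

lemma mix_in_basis_idx:
  "x \<in> basis_idx d \<Longrightarrow> y \<in> basis_idx d \<Longrightarrow> (\<lambda>i. if i \<in> S then y i else x i) \<in> basis_idx d"
  by (auto simp: basis_idx_def PiE_def Pi_def extensional_def)

lemma ptrans_cong:
  assumes "\<And>x y. x \<in> basis_idx d \<Longrightarrow> y \<in> basis_idx d \<Longrightarrow> \<rho> x y = \<rho>' x y"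
    and "x \<in> basis_idx d" "y \<in> basis_idx d"
  shows "ptrans S \<rho> x y = ptrans S \<rho>' x y"
  unfolding ptrans_def using assms by (simp add: mix_in_basis_idx)

lemma ptrans_complement:
  assumes "S \<subseteq> {0..<4}" "x \<in> basis_idx d" "y \<in> basis_idx d"
  shows "ptrans ({0..<4} - S) \<rho> x y = ptrans S \<rho> y x"
proof -
  have "(\<lambda>i. if i \<in> {0..<4} - S then a i else b i) = (\<lambda>i. if i \<in> S then b i else a i)"
    if "a \<in> basis_idx d" "b \<in> basis_idx d" for a b
    using that assms(1) by (auto simp: basis_idx_def PiE_def extensional_def)
  then show ?thesis
    unfolding ptrans_def using assms(2,3) by simp
qed

lemma psd_ptrans_complement:
  assumes "S \<subseteq> {0..<4}" "psd d (ptrans S \<rho>)"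
  shows "psd d (ptrans ({0..<4} - S) \<rho>)"
proof -
  have "psd d (ptrans ({0..<4} - S) \<rho>) \<longleftrightarrow> psd d (\<lambda>x y. ptrans S \<rho> y x)"
    by (rule psd_cong) (rule ptrans_complement[OF assms(1)])
  then show ?thesis
    using psd_transpose[OF assms(2)] by blast
qed

lemma ptrans_comp:
  assumes "inj \<pi>"
  shows "ptrans S \<rho> (x \<circ> \<pi>) (y \<circ> \<pi>) = ptrans (\<pi> ` S) (\<lambda>x y. \<rho> (x \<circ> \<pi>) (y \<circ> \<pi>)) x y"
  unfolding ptrans_def comp_def by (simp add: inj_image_mem_iff[OF assms])

lemma bij_betw_comp_permutes:
  assumes \<pi>: "\<pi> permutes {0..<4}"
  shows "bij_betw (\<lambda>x. x \<circ> \<pi>) (basis_idx d) (basis_idx d)"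
proof (rule bij_betw_byWitness[where f'="\<lambda>x. x \<circ> inv \<pi>"])
  have "x \<circ> \<sigma> \<in> basis_idx d" if "x \<in> basis_idx d" "\<sigma> permutes {0..<4}" for x \<sigma>
    using that permutes_in_image[OF that(2)] permutes_not_in[OF that(2)]
    by (auto simp: basis_idx_def PiE_def Pi_def extensional_def)
  then show "(\<lambda>x. x \<circ> \<pi>) ` basis_idx d \<subseteq> basis_idx d"
    and "(\<lambda>x. x \<circ> inv \<pi>) ` basis_idx d \<subseteq> basis_idx d"
    using \<pi> permutes_inv by auto
qed (use \<pi> in \<open>simp_all add: o_assoc[symmetric] permutes_inv_o\<close>)

lemma psd_ptrans_image:
  assumes \<pi>: "\<pi> permutes {0..<4}"
    and invariant: "\<And>x y. x \<in> basis_idx d \<Longrightarrow> y \<in> basis_idx d \<Longrightarrow> \<rho> (x \<circ> \<pi>) (y \<circ> \<pi>) = \<rho> x y"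
    and "psd d (ptrans S \<rho>)"
  shows "psd d (ptrans (\<pi> ` S) \<rho>)"
proof -
  have "psd d (\<lambda>x y. ptrans S \<rho> (x \<circ> \<pi>) (y \<circ> \<pi>))"
    using psd_reindex[OF bij_betw_comp_permutes[OF \<pi>]] assms(3) .
  moreover have "ptrans S \<rho> (x \<circ> \<pi>) (y \<circ> \<pi>) = ptrans (\<pi> ` S) \<rho> x y"
    if "x \<in> basis_idx d" "y \<in> basis_idx d" for x y
    unfolding ptrans_comp[OF permutes_inj[OF \<pi>]]
    using ptrans_cong[where \<rho> = "\<lambda>x y. \<rho> (x \<circ> \<pi>) (y \<circ> \<pi>)" and \<rho>' = \<rho>, OF invariant that] .
  ultimately show ?thesis
    using psd_cong[of d "ptrans (\<pi> ` S) \<rho>" "\<lambda>x y. ptrans S \<rho> (x \<circ> \<pi>) (y \<circ> \<pi>)"] by simp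
qed

lemma ex_permutes_image_eq:
  assumes "finite A" "S \<subseteq> A" "T \<subseteq> A" "card S = card T"
  shows "\<exists>\<pi>. \<pi> permutes A \<and> \<pi> ` S = T"
proof -
  have fin: "finite S" "finite T" "finite (A - S)" "finite (A - T)"
    using assms finite_subset by auto
  obtain f where f: "bij_betw f S T"
    using finite_same_card_bij[OF fin(1,2) assms(4)] by blast
  have "card (A - S) = card (A - T)"
    using assms by (simp add: card_Diff_subset finite_subset)
  then obtain f' where f': "bij_betw f' (A - S) (A - T)"
    using finite_same_card_bij[OF fin(3,4)] by blast
  define \<pi> where "\<pi> x = (if x \<in> S then f x else if x \<in> A then f' x else x)" for x
  have "bij_betw \<pi> S T" "bij_betw \<pi> (A - S) (A - T)"
    using f f' by (auto simp: \<pi>_def intro: bij_betw_cong[THEN iffD1])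
  then have "bij_betw \<pi> (S \<union> (A - S)) (T \<union> (A - T))"
    by (rule bij_betw_combine) blast
  then have "\<pi> permutes A"
    using assms(2,3) by (intro bij_imp_permutes) (auto simp: Un_absorb1 \<pi>_def)
  moreover have "\<pi> ` S = T"
    using \<open>bij_betw \<pi> S T\<close> by (simp add: bij_betw_def)
  ultimately show ?thesis by blast
qed

lemma psd_ptrans_all_bipartitions:
  assumes invariant: "\<And>\<pi> x y. \<pi> permutes {0..<4} \<Longrightarrow> x \<in> basis_idx d \<Longrightarrow> y \<in> basis_idx d \<Longrightarrow>
      \<rho> (x \<circ> \<pi>) (y \<circ> \<pi>) = \<rho> x y"
    and psd_1_3: "psd d (ptrans {0} \<rho>)" and psd_2_2: "psd d (ptrans {0, 1} \<rho>)"
    and S: "S \<subseteq> {0..<4}" "S \<noteq> {}" "S \<noteq> {0..<4}"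
  shows "psd d (ptrans S \<rho>)"
proof -
  have same_card: "psd d (ptrans T \<rho>)"
    if "T \<subseteq> {0..<4}" "U \<subseteq> {0..<4}" "card U = card T" "psd d (ptrans U \<rho>)" for T U :: "nat set"
    using ex_permutes_image_eq[of "{0..<4}" U T] psd_ptrans_image invariant that by auto
  have "card S \<le> 4" "card S \<noteq> 0" "card S \<noteq> 4"
    using S card_mono[OF _ S(1)] card_subset_eq[OF _ S(1)] finite_subset[OF S(1)] by auto
  then consider "card S = 1" | "card S = 2" | "card S = 3"
    by linarith
  then show ?thesis
  proof cases
    case 1
    then show ?thesis using same_card[OF S(1) _ _ psd_1_3] by simp
  next
    case 2
    then show ?thesis using same_card[OF S(1) _ _ psd_2_2] by simp
  next
    case 3
    then have "card ({0..<4} - S) = 1"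
      using S(1) by (simp add: card_Diff_subset finite_subset)
    then have "psd d (ptrans ({0..<4} - S) \<rho>)"
      using same_card[OF _ _ _ psd_1_3] by simp
    then show ?thesis
      using psd_ptrans_complement[of "{0..<4} - S"] S(1) by (simp add: double_diff)
  qed
qed

section \<open>Diagonal symmetric states\<close>

definition occupation :: "basis_label \<Rightarrow> nat multiset" where
  "occupation x = image_mset x (mset_set {0..<4})"

lemma occupation_eq: "occupation x = {#x 0, x 1, x 2, x 3#}"
  by (simp add: occupation_def numeral_eq_Suc atLeast0_lessThan_Suc add_mset_commute)

lemma count_occupation: "count (occupation x) j = card {i \<in> {0..<4::nat}. x i = j}"
  unfolding occupation_def count_image_mset by (simp add: vimage_def Int_def conj_commute)

lemma set_occupation_subset: "x \<in> basis_idx d \<Longrightarrow> set_mset (occupation x) \<subseteq> {0..<d}"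
  by (auto simp: occupation_def basis_idx_def PiE_def Pi_def)

lemma occupation_comp_permutes:
  assumes "\<pi> permutes {0..<4}"
  shows "occupation (x \<circ> \<pi>) = occupation x"
proof -
  have "image_mset \<pi> (mset_set {0..<4}) = mset_set {0..<4}"
    using assms by (simp add: image_mset_mset_set permutes_inj_on permutes_image)
  then show ?thesis
    by (metis occupation_def multiset.map_comp)
qed

definition dicke_label_of :: "nat \<Rightarrow> nat multiset \<Rightarrow> nat \<Rightarrow> nat" where
  "dicke_label_of d N = (\<lambda>j\<in>{0..<d}. count N j)"

lemma dicke_label_of_eq_iff:
  assumes "set_mset M \<subseteq> {0..<d}" "set_mset N \<subseteq> {0..<d}"
  shows "dicke_label_of d M = dicke_label_of d N \<longleftrightarrow> M = N"
proof
  assume eq: "dicke_label_of d M = dicke_label_of d N"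
  show "M = N"
  proof (rule multiset_eqI)
    fix j
    show "count M j = count N j"
    proof (cases "j < d")
      case True
      then show ?thesis
        using fun_cong[OF eq, of j] by (simp add: dicke_label_of_def)
    next
      case False
      then show ?thesis
        using assms by (metis atLeastLessThan_iff count_inI subsetD)
    qed
  qed
qed simp

lemma sum_count_eq_size:
  fixes N :: "nat multiset"
  assumes "set_mset N \<subseteq> {0..<d}"
  shows "(\<Sum>j<d. count N j) = size N"
proof -
  have "(\<Sum>j<d. count N j) = (\<Sum>j\<in>set_mset N. count N j)"
    by (rule sum.mono_neutral_right) (use assms in \<open>auto simp: not_in_iff\<close>)
  then show ?thesis
    by (simp add: size_multiset_overloaded_eq)
qed

lemma dicke_label_of_occupation:
  "x \<in> basis_idx d \<Longrightarrow> dicke_label_of d (occupation x) \<in> dicke_labels d"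
  using sum_count_eq_size[OF set_occupation_subset]
  by (simp add: dicke_labels_def dicke_label_of_def occupation_def)

lemma dicke_amp_eq:
  assumes "k \<in> dicke_labels d"
  shows "dicke_amp d k x =
    (if k = dicke_label_of d (occupation x)
     then complex_of_real (1 / sqrt (real (multinom4 d k))) else 0)"
proof -
  have "(\<forall>j<d. card {i \<in> {0..<4::nat}. x i = j} = k j) \<longleftrightarrow> k = dicke_label_of d (occupation x)"
    using assms
    by (auto simp: dicke_labels_def dicke_label_of_def count_occupation PiE_def extensional_def)
  then show ?thesis
    by (simp add: dicke_amp_def)
qed

lemma finite_dicke_labels: "finite (dicke_labels d)"
proof (rule finite_subset)
  show "dicke_labels d \<subseteq> {0..<d} \<rightarrow>\<^sub>E {0..4}"
  proof
    fix k assume k: "k \<in> dicke_labels d"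
    have "k j \<le> 4" if "j < d" for j
      using k member_le_sum[of j "{..<d}" k] that by (simp add: dicke_labels_def)
    then show "k \<in> {0..<d} \<rightarrow>\<^sub>E {0..4}"
      using k by (auto simp: dicke_labels_def)
  qed
qed (simp add: finite_PiE)

lemma diag_sym_state_occupation_form:
  assumes "diag_sym_state d \<rho>"
  obtains g :: "nat multiset \<Rightarrow> real" where "\<And>N. 0 \<le> g N"
    and "\<And>x y. x \<in> basis_idx d \<Longrightarrow> y \<in> basis_idx d \<Longrightarrow>
      \<rho> x y = (if occupation x = occupation y then complex_of_real (g (occupation x)) else 0)"
proof -
  obtain p where p_nonneg: "\<forall>k\<in>dicke_labels d. 0 \<le> p k"
    and rho: "\<forall>x\<in>basis_idx d. \<forall>y\<in>basis_idx d. \<rho> x y = (\<Sum>k\<in>dicke_labels d.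
      complex_of_real (p k) * dicke_amp d k x * cnj (dicke_amp d k y))"
    using assms unfolding diag_sym_state_def by blast
  define g where "g N = (let k = dicke_label_of d N in
    if k \<in> dicke_labels d then p k / real (multinom4 d k) else 0)" for N
  have "0 \<le> g N" for N
    using p_nonneg by (simp add: g_def Let_def)
  moreover have "\<rho> x y = (if occupation x = occupation y then complex_of_real (g (occupation x)) else 0)"
    (is "_ = ?entry") if x: "x \<in> basis_idx d" and y: "y \<in> basis_idx d" for x y
  proof -
    let ?k = "dicke_label_of d (occupation x)"
    have same_label: "?k = dicke_label_of d (occupation y) \<longleftrightarrow> occupation x = occupation y"
      using dicke_label_of_eq_iff set_occupation_subset x y by blast
    have "complex_of_real (p k) * dicke_amp d k x * cnj (dicke_amp d k y) =
        (if k = ?k then ?entry else 0)" if "k \<in> dicke_labels d" for k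
      using that same_label by (auto simp: dicke_amp_eq g_def Let_def simp flip: of_real_mult)
    then have "\<rho> x y = (\<Sum>k\<in>dicke_labels d. if k = ?k then ?entry else 0)"
      using rho x y by simp
    also have "\<dots> = ?entry"
      using dicke_label_of_occupation[OF x] by (simp add: finite_dicke_labels)
    finally show ?thesis .
  qed
  ultimately show ?thesis
    using that by blast
qed

locale occupation_diagonal =
  fixes d :: nat and g :: "nat multiset \<Rightarrow> real"
    and \<rho> :: operator
  assumes g_nonneg: "\<And>N. 0 \<le> g N"
    and rho_eq: "\<And>x y. x \<in> basis_idx d \<Longrightarrow> y \<in> basis_idx d \<Longrightarrow>
      \<rho> x y = (if occupation x = occupation y then complex_of_real (g (occupation x)) else 0)"
begin

lemma rho_comp_permutes:
  assumes "\<pi> permutes {0..<4}" "x \<in> basis_idx d" "y \<in> basis_idx d"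
  shows "\<rho> (x \<circ> \<pi>) (y \<circ> \<pi>) = \<rho> x y"
proof -
  have "x \<circ> \<pi> \<in> basis_idx d" "y \<circ> \<pi> \<in> basis_idx d"
    using bij_betwE[OF bij_betw_comp_permutes[OF assms(1)]] assms(2,3) by auto
  then show ?thesis
    using assms by (simp add: rho_eq occupation_comp_permutes)
qed

lemma ptrans_eq:
  assumes "x \<in> basis_idx d" "y \<in> basis_idx d"
  shows "ptrans S \<rho> x y =
    (if occupation (\<lambda>i. if i \<in> S then y i else x i) = occupation (\<lambda>i. if i \<in> S then x i else y i)
     then complex_of_real (g (occupation (\<lambda>i. if i \<in> S then y i else x i))) else 0)"
  unfolding ptrans_def using assms by (simp add: rho_eq mix_in_basis_idx)

end

section \<open>The 1:3 partial transpose\<close>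

lemma cnj_mult_of_real_mult_self:
  "cnj z * complex_of_real c * z = complex_of_real (c * (cmod z)\<^sup>2)"
proof -
  have "cnj z * complex_of_real c * z = complex_of_real c * (z * cnj z)"
    by (simp add: mult_ac)
  then show ?thesis
    by (simp only: complex_norm_square[symmetric] of_real_mult)
qed

lemma cnj_sum_mult_sum:
  "cnj (sum v X) * c * sum w Y = (\<Sum>x\<in>X. \<Sum>y\<in>Y. cnj (v x) * c * w y)"
  by (simp add: cnj_sum sum_distrib_left sum_distrib_right sum.swap[of _ Y])

lemma quadratic_sum_group:
  fixes v :: "'a \<Rightarrow> complex" and key :: "'a \<Rightarrow> 'b"
  assumes fin: "finite B" "finite K" and key: "key ` B \<subseteq> K"
  shows "(\<Sum>x\<in>B. \<Sum>y\<in>B. cnj (v x) * C (key x) (key y) * v y) =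
    (\<Sum>a\<in>K. \<Sum>b\<in>K.
      cnj (\<Sum>x\<in>{x\<in>B. key x = a}. v x) * C a b * (\<Sum>y\<in>{y\<in>B. key y = b}. v y))"
proof -
  let ?fiber = "\<lambda>a. {x\<in>B. key x = a}"
  have group: "(\<Sum>x\<in>B. h (key x) x) = (\<Sum>a\<in>K. \<Sum>x\<in>?fiber a. h a x)"
    for h :: "'b \<Rightarrow> 'a \<Rightarrow> complex"
  proof -
    have "(\<Sum>x\<in>B. h (key x) x) = (\<Sum>a\<in>K. \<Sum>x\<in>?fiber a. h (key x) x)"
      using sum.group[OF fin key, of "\<lambda>x. h (key x) x"] by simp
    also have "\<dots> = (\<Sum>a\<in>K. \<Sum>x\<in>?fiber a. h a x)"
      by (intro sum.cong refl) auto
    finally show ?thesis .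
  qed
  have "(\<Sum>x\<in>B. \<Sum>y\<in>B. cnj (v x) * C (key x) (key y) * v y) =
      (\<Sum>a\<in>K. \<Sum>x\<in>?fiber a. \<Sum>y\<in>B. cnj (v x) * C a (key y) * v y)"
    by (rule group[of "\<lambda>a x. \<Sum>y\<in>B. cnj (v x) * C a (key y) * v y"])
  also have "\<dots> = (\<Sum>a\<in>K. \<Sum>x\<in>?fiber a. \<Sum>b\<in>K. \<Sum>y\<in>?fiber b. cnj (v x) * C a b * v y)"
  proof (intro sum.cong refl)
    fix a x
    show "(\<Sum>y\<in>B. cnj (v x) * C a (key y) * v y) =
        (\<Sum>b\<in>K. \<Sum>y\<in>?fiber b. cnj (v x) * C a b * v y)"
      by (rule group[of "\<lambda>b y. cnj (v x) * C a b * v y"])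
  qed
  also have "\<dots> = (\<Sum>a\<in>K. \<Sum>b\<in>K. \<Sum>x\<in>?fiber a. \<Sum>y\<in>?fiber b. cnj (v x) * C a b * v y)"
    by (intro sum.cong refl sum.swap)
  also have "\<dots> = (\<Sum>a\<in>K. \<Sum>b\<in>K. cnj (\<Sum>x\<in>?fiber a. v x) * C a b * (\<Sum>y\<in>?fiber b. v y))"
    by (simp only: cnj_sum_mult_sum)
  finally show ?thesis .
qed

lemma add_mset_eq_add_mset_cases:
  assumes "add_mset i m = add_mset j n"
  obtains "i = j" "m = n" | r where "m = add_mset j r" "n = add_mset i r"
proof (cases "i = j \<and> m = n")
  case False
  then have "m = add_mset j (n - {#i#})" "n = add_mset i (m - {#j#})"
    using assms by (auto simp: add_eq_conv_diff)
  then have "m = add_mset j (m - {#j#})" "n = add_mset i (m - {#j#})"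
    by simp_all
  then show ?thesis using that(2) by blast
qed (use that(1) in blast)

lemma basis_idx_less: "x \<in> basis_idx d \<Longrightarrow> i < 4 \<Longrightarrow> x i < d"
  by (auto simp: basis_idx_def PiE_def Pi_def)

definition split_party0 :: "basis_label \<Rightarrow> nat \<times> nat multiset" where
  "split_party0 x = (x 0, {#x 1, x 2, x 3#})"

definition split_labels :: "nat \<Rightarrow> (nat \<times> nat multiset) set" where
  "split_labels d = {0..<d} \<times> multisets_of_size {0..<d} 3"

lemma split_party0_in_split_labels: "x \<in> basis_idx d \<Longrightarrow> split_party0 x \<in> split_labels d"
  using basis_idx_less[of x d 0] basis_idx_less[of x d 1]
    basis_idx_less[of x d 2] basis_idx_less[of x d 3]
  by (simp add: split_labels_def split_party0_def multisets_of_size_def)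

definition block_pair ::
    "nat multiset \<Rightarrow> nat \<Rightarrow> nat \<Rightarrow> (nat \<times> nat multiset) \<times> (nat \<times> nat multiset)" where
  "block_pair r j i = ((j, add_mset j r), (i, add_mset i r))"

definition block_pairs :: "nat \<Rightarrow> ((nat \<times> nat multiset) \<times> (nat \<times> nat multiset)) set" where
  "block_pairs d =
    (\<lambda>(r, j, i). block_pair r j i) ` (multisets_of_size {0..<d} 2 \<times> {0..<d} \<times> {0..<d})"

lemma inj_on_block_pair: "inj_on (\<lambda>(r, j, i). block_pair r j i) A"
  by (rule inj_onI) (auto simp: block_pair_def)

lemma block_pairs_subset: "block_pairs d \<subseteq> split_labels d \<times> split_labels d"
  by (auto simp: block_pairs_def block_pair_def split_labels_def multisets_of_size_def)

lemma eq_if_not_in_block_pairs: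
  assumes "(j, m) \<in> split_labels d" "(i, n) \<in> split_labels d" "add_mset i m = add_mset j n"
    and "((j, m), (i, n)) \<notin> block_pairs d"
  shows "j = i \<and> m = n"
  using assms(3)
proof (cases rule: add_mset_eq_add_mset_cases)
  case (2 r)
  then have "r \<in> multisets_of_size {0..<d} 2"
    using assms(1) by (auto simp: split_labels_def multisets_of_size_def)
  then have "((j, m), (i, n)) \<in> block_pairs d"
    using assms(1,2) 2 unfolding block_pairs_def block_pair_def split_labels_def by force
  with assms(4) show ?thesis
    by blast
qed simp

definition paired_basis :: "nat \<Rightarrow> nat \<Rightarrow> nat \<Rightarrow> basis_label" where
  "paired_basis s t i = (\<lambda>k\<in>{0..<4}. [s, i, t, i] ! k)"

lemma paired_basis_in_basis_idx:
  "s < d \<Longrightarrow> t < d \<Longrightarrow> i < d \<Longrightarrow> paired_basis s t i \<in> basis_idx d"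
  by (auto simp: paired_basis_def basis_idx_def less_Suc_eq numeral_eq_Suc)

lemma inj_paired_basis: "inj (paired_basis s t)"
proof (rule injI)
  fix i j assume "paired_basis s t i = paired_basis s t j"
  then have "paired_basis s t i 1 = paired_basis s t j 1"
    by simp
  then show "i = j"
    by (simp add: paired_basis_def)
qed

context occupation_diagonal
begin

definition reduced_pt0 :: "nat \<times> nat multiset \<Rightarrow> nat \<times> nat multiset \<Rightarrow> complex" where
  "reduced_pt0 a b = (case (a, b) of ((j, m), (i, n)) \<Rightarrow>
     if add_mset i m = add_mset j n then complex_of_real (g (add_mset i m)) else 0)"

lemma ptrans_0_eq:
  "x \<in> basis_idx d \<Longrightarrow> y \<in> basis_idx d \<Longrightarrow>
    ptrans {0} \<rho> x y = reduced_pt0 (split_party0 x) (split_party0 y)"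
  by (simp add: ptrans_eq occupation_eq reduced_pt0_def split_party0_def)

lemma reduced_pt0_block_pair:
  "reduced_pt0 (j, add_mset j r) (i, add_mset i r) =
    complex_of_real (g (add_mset i (add_mset j r)))"
  by (simp add: reduced_pt0_def add_mset_commute)

definition fiber_sum :: "(basis_label \<Rightarrow> complex) \<Rightarrow> nat \<times> nat multiset \<Rightarrow> complex" where
  "fiber_sum v a = (\<Sum>x\<in>{x \<in> basis_idx d. split_party0 x = a}. v x)"

lemma quad_form_ptrans_0:
  "quad_form d (ptrans {0} \<rho>) v = (\<Sum>(a, b)\<in>split_labels d \<times> split_labels d.
    cnj (fiber_sum v a) * reduced_pt0 a b * fiber_sum v b)"
proof -
  have "quad_form d (ptrans {0} \<rho>) v = (\<Sum>x\<in>basis_idx d. \<Sum>y\<in>basis_idx d.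
      cnj (v x) * reduced_pt0 (split_party0 x) (split_party0 y) * v y)"
    unfolding quad_form_def by (intro sum.cong refl) (simp add: ptrans_0_eq)
  also have "\<dots> = (\<Sum>a\<in>split_labels d. \<Sum>b\<in>split_labels d.
      cnj (fiber_sum v a) * reduced_pt0 a b * fiber_sum v b)"
    unfolding fiber_sum_def using split_party0_in_split_labels
    by (intro quadratic_sum_group image_subsetI)
      (simp_all add: split_labels_def finite_multisets_of_size)
  finally show ?thesis
    by (simp add: sum.cartesian_product)
qed

definition block_form :: "nat multiset \<Rightarrow> (nat \<Rightarrow> complex) \<Rightarrow> complex" where
  "block_form r c =
    (\<Sum>j\<in>{0..<d}. \<Sum>i\<in>{0..<d}. cnj (c j) * complex_of_real (g (add_mset i (add_mset j r))) * c i)"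

lemma block_form_eq_quad_form_ptrans_01:
  assumes "r \<in> multisets_of_size {0..<d} 2"
  obtains u where "block_form r c = quad_form d (ptrans {0, 1} \<rho>) u"
proof -
  obtain s r' where "r = add_mset s r'" "size r' = 1"
    using assms by (cases r) (auto simp: multisets_of_size_def)
  then obtain t where r: "r = {#s, t#}"
    using size_1_singleton_mset by blast
  then have st: "s < d" "t < d"
    using assms by (auto simp: multisets_of_size_def)
  let ?e = "paired_basis s t"
  define u where "u x = (if x \<in> ?e ` {0..<d} then c (x 1) else 0)" for x
  have restrict: "(\<Sum>x\<in>basis_idx d. f x) = (\<Sum>i\<in>{0..<d}. f (?e i))"
    if "\<And>x. x \<notin> ?e ` {0..<d} \<Longrightarrow> f x = 0" for f :: "basis_label \<Rightarrow> complex"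
  proof -
    have "(\<Sum>x\<in>basis_idx d. f x) = (\<Sum>x\<in>?e ` {0..<d}. f x)"
      using paired_basis_in_basis_idx[OF st] that by (intro sum.mono_neutral_right) auto
    then show ?thesis
      by (simp add: sum.reindex inj_on_subset[OF inj_paired_basis])
  qed
  have u: "u (?e i) = c i" if "i < d" for i
    using that by (auto simp: u_def paired_basis_def)
  have entry: "ptrans {0, 1} \<rho> (?e j) (?e i) = complex_of_real (g (add_mset i (add_mset j r)))"
    if "i < d" "j < d" for i j
    unfolding ptrans_eq[OF paired_basis_in_basis_idx[OF st that(2)]
        paired_basis_in_basis_idx[OF st that(1)]]
    by (simp add: occupation_eq paired_basis_def r add_mset_commute)
  have "quad_form d (ptrans {0, 1} \<rho>) u =
      (\<Sum>j\<in>{0..<d}. \<Sum>i\<in>{0..<d}. cnj (u (?e j)) * ptrans {0, 1} \<rho> (?e j) (?e i) * u (?e i))"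
    unfolding quad_form_def by (simp add: restrict u_def)
  also have "\<dots> = block_form r c"
    unfolding block_form_def
  proof (intro sum.cong refl)
    fix j i assume "j \<in> {0..<d}" "i \<in> {0..<d}"
    then show "cnj (u (?e j)) * ptrans {0, 1} \<rho> (?e j) (?e i) * u (?e i) =
        cnj (c j) * complex_of_real (g (add_mset i (add_mset j r))) * c i"
      using u[of i] u[of j] entry[of i j] by simp
  qed
  finally show ?thesis
    by (rule that[OF sym])
qed

lemma quad_form_ptrans_0_decomposition:
  "quad_form d (ptrans {0} \<rho>) v =
    (\<Sum>(a, b)\<in>split_labels d \<times> split_labels d - block_pairs d.
      cnj (fiber_sum v a) * reduced_pt0 a b * fiber_sum v b) +
    (\<Sum>r\<in>multisets_of_size {0..<d} 2. block_form r (\<lambda>j. fiber_sum v (j, add_mset j r)))"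
proof -
  let ?R = "multisets_of_size {0..<d} 2"
  define F where "F = (\<lambda>(a, b). cnj (fiber_sum v a) * reduced_pt0 a b * fiber_sum v b)"
  have "quad_form d (ptrans {0} \<rho>) v =
      (\<Sum>p\<in>split_labels d \<times> split_labels d - block_pairs d. F p) + (\<Sum>p\<in>block_pairs d. F p)"
    unfolding quad_form_ptrans_0 F_def using block_pairs_subset
    by (intro sum.subset_diff) (auto simp: split_labels_def finite_multisets_of_size)
  also have "(\<Sum>p\<in>block_pairs d. F p) = (\<Sum>(r, j, i)\<in>?R \<times> {0..<d} \<times> {0..<d}. F (block_pair r j i))"
    unfolding block_pairs_def sum.reindex[OF inj_on_block_pair] by (intro sum.cong) auto
  also have "\<dots> = (\<Sum>r\<in>?R. block_form r (\<lambda>j. fiber_sum v (j, add_mset j r)))"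
    by (simp add: sum.cartesian_product[symmetric] block_form_def F_def block_pair_def
        reduced_pt0_block_pair)
  finally show ?thesis
    by (simp add: F_def)
qed

lemma psd_ptrans_0_if_psd_ptrans_01:
  assumes psd_2_2: "psd d (ptrans {0, 1} \<rho>)"
  shows "psd d (ptrans {0} \<rho>)"
  unfolding psd_iff_quad_form
proof
  fix v
  define F where "F = (\<lambda>(a, b). cnj (fiber_sum v a) * reduced_pt0 a b * fiber_sum v b)"
  have off_blocks: "Im (F p) = 0 \<and> 0 \<le> Re (F p)"
    if off: "p \<in> split_labels d \<times> split_labels d - block_pairs d" for p
  proof -
    obtain j m i n where p: "p = ((j, m), (i, n))"
      by (metis prod.collapse)
    consider "reduced_pt0 (j, m) (i, n) = 0"
      | "j = i" "m = n" "reduced_pt0 (j, m) (i, n) = complex_of_real (g (add_mset i m))"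
      using off eq_if_not_in_block_pairs[of j m d i n] unfolding p
      by (cases "add_mset i m = add_mset j n") (auto simp: reduced_pt0_def)
    then show ?thesis
    proof cases
      case 2
      then have "F p = complex_of_real (g (add_mset i m) * (cmod (fiber_sum v (i, n)))\<^sup>2)"
        unfolding F_def p by (simp only: prod.case cnj_mult_of_real_mult_self)
      then show ?thesis
        by (simp add: g_nonneg)
    qed (simp add: F_def p)
  qed
  have on_blocks: "Im (block_form r c) = 0 \<and> 0 \<le> Re (block_form r c)"
    if "r \<in> multisets_of_size {0..<d} 2" for r c
    using block_form_eq_quad_form_ptrans_01[OF that] psd_2_2 unfolding psd_iff_quad_form by metis
  show "Im (quad_form d (ptrans {0} \<rho>) v) = 0 \<and> 0 \<le> Re (quad_form d (ptrans {0} \<rho>) v)"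
    unfolding quad_form_ptrans_0_decomposition F_def[symmetric] using off_blocks on_blocks
    by (auto intro!: add_nonneg_nonneg sum_nonneg)
qed

end

theorem lemma4:
  fixes d :: nat and \<rho> :: "(nat \<Rightarrow> nat) \<Rightarrow> (nat \<Rightarrow> nat) \<Rightarrow> complex"
  assumes "d \<ge> 2"
    and "diag_sym_state d \<rho>"
    and "psd d (ptrans {0, 1} \<rho>)"
  shows "\<forall>S. S \<subseteq> {0..<4} \<and> S \<noteq> {} \<and> S \<noteq> {0..<4} \<longrightarrow> psd d (ptrans S \<rho>)"
proof -
  obtain g where "occupation_diagonal d g \<rho>"
    using diag_sym_state_occupation_form[OF assms(2)] by (metis occupation_diagonal.intro)
  then interpret occupation_diagonal d g \<rho> .
  have "psd d (ptrans {0} \<rho>)"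
    using psd_ptrans_0_if_psd_ptrans_01[OF assms(3)] .
  then show ?thesis
    using psd_ptrans_all_bipartitions[OF rho_comp_permutes _ assms(3)] by blast
qed

end
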